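(* Let $(A_n)_{n\in\mathbb N}$ be a sequence of invertible linear operators on $\mathbb R^d$ and $\|\cdot\|$ a norm on $\mathbb R^d$. The following are equivalent: (1) $(A_n)_{n\in\mathbb N}$ admits a nonuniform strong polynomial dichotomy; (2) there is a sequence of norms $(\|\cdot\|_n)_{n\in\mathbb N}$ on $\mathbb R^d$ such that $(A_n)_{n\in\mathbb N}$ admits a strong polynomial dichotomy with respect to $(\|\cdot\|_n)_{n\in\mathbb N}$ and there exist $C>0$, $\delta\ge0$ with $\|x\|\le\|x\|_n\le Cn^\delta\|x\|$ for all $x\in\mathbb R^d$, $n\in\mathbb N$.
   Context: $\mathbb N=\{1,2,\dots\}$. $\mathcal A(m,n)=A_{m-1}\cdots A_n$ ($m>n$), $\mathrm{Id}$ ($m=n$), $A_m^{-1}\cdots A_{n-1}^{-1}$ ($m<n$). Nonuniform strong polynomial dichotomy: there exist $K>0$, $a\ge\lambda>0$, $\varepsilon\ge0$ and projections $P_n$ with $A_nP_n=P_{n+1}A_n$ such that for all $m\ge n$ in $\mathbb N$, with $Q_m=\mathrm{Id}-P_m$: $\|\mathcal A(m,n)P_n\|\le K(m/n)^{-\lambda}n^\varepsilon$, $\|\mathcal A(n,m)Q_m\|\le K(m/n)^{-\lambda}m^\varepsilon$, $\|\mathcal A(m,n)\|\le K(m/n)^an^\varepsilon$, $\|\mathcal A(n,m)\|\le K(m/n)^am^\varepsilon$ (operator norms induced by $\|\cdot\|$). Strong polynomial dichotomy w.r.t. $(\|\cdot\|_n)$: there exist $K>0$, $a\ge\lambda>0$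 and projections $P_n$ with $A_nP_n=P_{n+1}A_n$ such that for $m\ge n$, $x\in\mathbb R^d$: $\|\mathcal A(m,n)P_nx\|_m\le K(m/n)^{-\lambda}\|x\|_n$, $\|\mathcal A(n,m)Q_mx\|_n\le K(m/n)^{-\lambda}\|x\|_m$, $\|\mathcal A(m,n)x\|_m\le K(m/n)^a\|x\|_n$, $\|\mathcal A(n,m)x\|_n\le K(m/n)^a\|x\|_m$. *)

theory Defs
  imports "HOL-Analysis.Analysis"
begin

definition is_norm :: "(real ^ 'd \<Rightarrow> real) \<Rightarrow> bool" where
  "is_norm N \<longleftrightarrow> (\<forall>x. 0 \<le> N x) \<and> (\<forall>x. N x = 0 \<longleftrightarrow> x = 0)
     \<and> (\<forall>c x. N (c *\<^sub>R x) = \<bar>c\<bar> * N x) \<and> (\<forall>x y. N (x + y) \<le> N x + N y)"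

definition op_norm :: "(real ^ 'd \<Rightarrow> real) \<Rightarrow> real ^ 'd ^ 'd \<Rightarrow> real" where
  "op_norm N T = (SUP x\<in>{x. N x \<le> 1}. N (T *v x))"

fun fwd :: "(nat \<Rightarrow> real ^ 'd ^ 'd) \<Rightarrow> nat \<Rightarrow> nat \<Rightarrow> real ^ 'd ^ 'd" where
  "fwd A n 0 = mat 1"
| "fwd A n (Suc k) = A (n + k) ** fwd A n k"

fun bwd :: "(nat \<Rightarrow> real ^ 'd ^ 'd) \<Rightarrow> nat \<Rightarrow> nat \<Rightarrow> real ^ 'd ^ 'd" where
  "bwd A m 0 = mat 1"
| "bwd A m (Suc k) = bwd A m k ** matrix_inv (A (m + k))"

definition cocycle :: "(nat \<Rightarrow> real ^ 'd ^ 'd) \<Rightarrow> nat \<Rightarrow> nat \<Rightarrow> real ^ 'd ^ 'd" where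
  "cocycle A m n = (if n \<le> m then fwd A n (m - n) else bwd A m (n - m))"

text \<open>Projections P_n (n \<in> \<nat> = {1,2,...}) compatible with the dynamics.\<close>
definition invariant_projections :: "(nat \<Rightarrow> real ^ 'd ^ 'd) \<Rightarrow> (nat \<Rightarrow> real ^ 'd ^ 'd) \<Rightarrow> bool" where
  "invariant_projections A P \<longleftrightarrow>
     (\<forall>n\<ge>1. P n ** P n = P n \<and> A n ** P n = P (Suc n) ** A n)"

definition nonuniform_strong_poly_dichotomy ::
  "(nat \<Rightarrow> real ^ 'd ^ 'd) \<Rightarrow> (real ^ 'd \<Rightarrow> real) \<Rightarrow> bool" where
  "nonuniform_strong_poly_dichotomy A N \<longleftrightarrow>
    (\<exists>K a lam eps P. K > 0 \<and> a \<ge> lam \<and> lam > 0 \<and> eps \<ge> 0 \<and> invariant_projections A P \<and>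
      (\<forall>m n. 1 \<le> n \<and> n \<le> m \<longrightarrow>
         op_norm N (cocycle A m n ** P n) \<le> K * (real m / real n) powr (-lam) * real n powr eps
       \<and> op_norm N (cocycle A n m ** (mat 1 - P m)) \<le> K * (real m / real n) powr (-lam) * real m powr eps
       \<and> op_norm N (cocycle A m n) \<le> K * (real m / real n) powr a * real n powr eps
       \<and> op_norm N (cocycle A n m) \<le> K * (real m / real n) powr a * real m powr eps))"

definition strong_poly_dichotomy_wrt ::
  "(nat \<Rightarrow> real ^ 'd ^ 'd) \<Rightarrow> (nat \<Rightarrow> real ^ 'd \<Rightarrow> real) \<Rightarrow> bool" where
  "strong_poly_dichotomy_wrt A Ns \<longleftrightarrow>
    (\<exists>K a lam P. K > 0 \<and> a \<ge> lam \<and> lam > 0 \<and> invariant_projections A P \<and>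
      (\<forall>m n x. 1 \<le> n \<and> n \<le> m \<longrightarrow>
         Ns m (cocycle A m n ** P n *v x) \<le> K * (real m / real n) powr (-lam) * Ns n x
       \<and> Ns n (cocycle A n m ** (mat 1 - P m) *v x) \<le> K * (real m / real n) powr (-lam) * Ns m x
       \<and> Ns m (cocycle A m n *v x) \<le> K * (real m / real n) powr a * Ns n x
       \<and> Ns n (cocycle A n m *v x) \<le> K * (real m / real n) powr a * Ns m x))"

end

theory Submission
  imports Defs
begin

(* Lyapunov norms.  Given the nonuniform dichotomy, write Q_n = Id - P_n, take the weight
   w(t) = min(t^lam, t^a) and put

     |x|_n = sup_{k >= 1} ( w(k/n) |A(k,n) P_n x| + w(n/k) |A(k,n) Q_n x| ).

   Since lam <= a, w(t/s) <= s^(-lam) w(t) and w(s t) <= s^a w(t) for s >= 1, so the cocycle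
   identities A(k,m) A(m,n) = A(k,n) and P_m A(m,n) = A(m,n) P_n bound every term of
   |A(m,n) x|_m by a multiple of the corresponding term of |x|_n: the norms |.|_n carry a
   strong polynomial dichotomy with constant 1.  Taking k = n gives |x| <= |x|_n, and the
   nonuniform bounds give |x|_n <= C n^(2 eps) |x|; the exponent doubles because for k < n the
   projection P_n has to be estimated on its own.  Conversely, sandwiching |.|_n between |.|
   and C n^delta |.| turns the uniform estimates into nonuniform ones with eps = delta. *)

section \<open>Norms on \<open>\<real>\<^sup>d\<close> and their operator norms\<close>

lemma is_norm_nonneg: "is_norm N \<Longrightarrow> 0 \<le> N x"
  unfolding is_norm_def by blast

lemma is_norm_eq_0_iff: "is_norm N \<Longrightarrow> N x = 0 \<longleftrightarrow> x = 0"
  unfolding is_norm_def by blast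

lemma is_norm_scaleR: "is_norm N \<Longrightarrow> N (c *\<^sub>R x) = \<bar>c\<bar> * N x"
  unfolding is_norm_def by blast

lemma is_norm_triangle: "is_norm N \<Longrightarrow> N (x + y) \<le> N x + N y"
  unfolding is_norm_def by blast

lemma is_norm_zero: "is_norm N \<Longrightarrow> N 0 = 0"
  by (simp add: is_norm_eq_0_iff)

lemma is_norm_minus: "is_norm N \<Longrightarrow> N (- x) = N x"
  using is_norm_scaleR[of N "-1" x] by simp

lemma is_norm_reverse_triangle: "is_norm N \<Longrightarrow> \<bar>N x - N y\<bar> \<le> N (x - y)"
  using is_norm_triangle[of N "x - y" y] is_norm_triangle[of N "y - x" x]
    is_norm_minus[of N "x - y"] by simp

lemma is_norm_sum: "is_norm N \<Longrightarrow> N (sum f S) \<le> (\<Sum>i\<in>S. N (f i))"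
proof (induction S rule: infinite_finite_induct)
  case (insert i S)
  then show ?case using is_norm_triangle[of N "f i" "sum f S"] by simp
qed (simp_all add: is_norm_zero)

lemma is_norm_le_norm:
  fixes N :: "real ^ 'd \<Rightarrow> real"
  assumes "is_norm N"
  obtains C where "C > 0" "\<And>x. N x \<le> C * norm x"
proof
  define C where "C = 1 + (\<Sum>i\<in>UNIV. N (axis i (1::real)))"
  show "C > 0"
    unfolding C_def using is_norm_nonneg[OF assms] by (simp add: add_pos_nonneg sum_nonneg)
  fix x :: "real ^ 'd"
  have "N x = N (\<Sum>i\<in>UNIV. x $ i *\<^sub>R axis i 1)"
    using basis_expansion[of x] by (simp add: scalar_mult_eq_scaleR)
  also have "\<dots> \<le> (\<Sum>i\<in>UNIV. \<bar>x $ i\<bar> * N (axis i 1))"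
    by (rule order_trans[OF is_norm_sum[OF assms]]) (simp add: is_norm_scaleR[OF assms])
  also have "\<dots> \<le> (\<Sum>i\<in>UNIV. norm x * N (axis i 1))"
    by (intro sum_mono mult_right_mono component_le_norm_cart is_norm_nonneg[OF assms])
  also have "\<dots> \<le> C * norm x"
    unfolding C_def by (simp add: sum_distrib_left[symmetric] algebra_simps)
  finally show "N x \<le> C * norm x" .
qed

lemma is_norm_ge_norm:
  fixes N :: "real ^ 'd \<Rightarrow> real"
  assumes "is_norm N"
  obtains c where "c > 0" "\<And>x. c * norm x \<le> N x"
proof -
  obtain C where C: "C > 0" "\<And>x. N x \<le> C * norm x"
    using is_norm_le_norm[OF assms] by blast
  have "C-lipschitz_on UNIV N"
  proof (rule lipschitz_onI)
    fix x y :: "real ^ 'd"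
    show "dist (N x) (N y) \<le> C * dist x y"
      using is_norm_reverse_triangle[OF assms, of x y] C(2)[of "x - y"]
      by (simp add: dist_real_def dist_norm)
  qed (use C in simp)
  then have "continuous_on (sphere 0 1) N"
    by (meson continuous_on_subset lipschitz_on_continuous_on subset_UNIV)
  moreover have "sphere (0 :: real ^ 'd) 1 \<noteq> {}"
    by simp
  ultimately obtain x0 where x0: "x0 \<in> sphere 0 1" "\<And>y. y \<in> sphere 0 1 \<Longrightarrow> N x0 \<le> N y"
    using continuous_attains_inf[OF compact_sphere] by blast
  show ?thesis
  proof
    show "N x0 > 0"
      using x0(1) is_norm_eq_0_iff[OF assms, of x0] is_norm_nonneg[OF assms, of x0] by force
    fix x :: "real ^ 'd"
    show "N x0 * norm x \<le> N x"
    proof (cases "x = 0")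
      case False
      have "N x0 \<le> N ((1 / norm x) *\<^sub>R x)"
        using x0(2) False by simp
      also have "\<dots> = N x / norm x"
        using is_norm_scaleR[OF assms] by simp
      finally show ?thesis
        using False by (simp add: field_simps)
    qed (simp add: is_norm_zero[OF assms])
  qed
qed

lemma op_norm_bound:
  fixes N :: "real ^ 'd \<Rightarrow> real"
  assumes "is_norm N"
  shows "N (T *v x) \<le> op_norm N T * N x"
proof -
  obtain C where C: "C > 0" "\<And>x. N x \<le> C * norm x"
    using is_norm_le_norm[OF assms] by blast
  obtain c where c: "c > 0" "\<And>x. c * norm x \<le> N x"
    using is_norm_ge_norm[OF assms] by blast
  obtain B where B: "B > 0" "\<And>x. norm (T *v x) \<le> norm x * B"
    using bounded_linear.pos_bounded[OF matrix_vector_mul_bounded_linear] by blast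
  have bdd: "bdd_above ((\<lambda>y. N (T *v y)) ` {y. N y \<le> 1})"
  proof (rule bdd_aboveI2)
    fix y assume "y \<in> {y. N y \<le> 1}"
    then have "norm y \<le> 1 / c"
      using c(2)[of y] c(1) by (simp add: field_simps)
    then have "norm (T *v y) \<le> 1 / c * B"
      using B by (meson mult_right_mono less_imp_le order_trans)
    then show "N (T *v y) \<le> C * (1 / c * B)"
      using C by (meson mult_left_mono less_imp_le order_trans)
  qed
  show ?thesis
  proof (cases "x = 0")
    case False
    then have Nx: "N x > 0"
      using is_norm_eq_0_iff[OF assms, of x] is_norm_nonneg[OF assms, of x] by force
    have "N ((1 / N x) *\<^sub>R x) = 1"
      using Nx is_norm_scaleR[OF assms] by simp
    then have "N (T *v ((1 / N x) *\<^sub>R x)) \<le> op_norm N T"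
      unfolding op_norm_def by (intro cSUP_upper[OF _ bdd]) auto
    then show ?thesis
      using Nx by (simp add: matrix_vector_mult_scaleR is_norm_scaleR[OF assms] field_simps)
  qed (simp add: is_norm_zero[OF assms])
qed

lemma op_norm_le:
  assumes "is_norm N" "\<And>x. N (T *v x) \<le> B * N x" "B \<ge> 0"
  shows "op_norm N T \<le> B"
  unfolding op_norm_def
proof (rule cSUP_least)
  have "0 \<in> {x. N x \<le> 1}"
    using is_norm_zero[OF assms(1)] by simp
  then show "{x. N x \<le> 1} \<noteq> {}"
    by blast
  fix x assume "x \<in> {x. N x \<le> 1}"
  then show "N (T *v x) \<le> B"
    using assms(2)[of x] mult_left_mono[of "N x" 1 B] assms(3) by simp
qed

section \<open>The cocycle through a fundamental matrix\<close>

lemma matrix_inv_right: "invertible (M :: real ^ 'n ^ 'n) \<Longrightarrow> M ** matrix_inv M = mat 1"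
  unfolding invertible_def matrix_inv_def by (rule someI_ex[THEN conjunct1])

lemma matrix_inv_left: "invertible (M :: real ^ 'n ^ 'n) \<Longrightarrow> matrix_inv M ** M = mat 1"
  unfolding invertible_def matrix_inv_def by (rule someI_ex[THEN conjunct2])

lemma matrix_diff_ldistrib: "(M :: real ^ 'n ^ 'm) ** (B - C) = M ** B - M ** C"
  by (simp add: matrix_matrix_mult_def vec_eq_iff sum_subtractf algebra_simps)

lemma matrix_diff_rdistrib: "((B :: real ^ 'n ^ 'm) - C) ** M = B ** M - C ** M"
  by (simp add: matrix_matrix_mult_def vec_eq_iff sum_subtractf algebra_simps)

definition fundamental_matrix :: "(nat \<Rightarrow> real ^ 'd ^ 'd) \<Rightarrow> nat \<Rightarrow> real ^ 'd ^ 'd" where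
  "fundamental_matrix A n = fwd A 1 (n - 1)"

lemma fundamental_matrix_1 [simp]: "fundamental_matrix A (Suc 0) = mat 1"
  by (simp add: fundamental_matrix_def)

lemma fundamental_matrix_Suc: "1 \<le> n \<Longrightarrow> fundamental_matrix A (Suc n) = A n ** fundamental_matrix A n"
  by (cases n) (auto simp: fundamental_matrix_def)

context
  fixes A :: "nat \<Rightarrow> real ^ 'd ^ 'd"
  assumes invertible_A: "\<And>n. 1 \<le> n \<Longrightarrow> invertible (A n)"
begin

lemma invertible_fundamental_matrix: "1 \<le> n \<Longrightarrow> invertible (fundamental_matrix A n)"
proof (induction n rule: dec_induct)
  case base
  then show ?case by (auto simp: invertible_def)
next
  case (step n)
  then show ?case by (simp add: fundamental_matrix_Suc invertible_mult invertible_A)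
qed

lemma fwd_eq_fundamental:
  assumes "1 \<le> n"
  shows "fwd A n k = fundamental_matrix A (n + k) ** matrix_inv (fundamental_matrix A n)"
proof (induction k)
  case 0
  then show ?case using matrix_inv_right[OF invertible_fundamental_matrix[OF assms]] by simp
next
  case (Suc k)
  then show ?case using assms by (simp add: matrix_mul_assoc fundamental_matrix_Suc)
qed

lemma bwd_eq_fundamental:
  assumes "1 \<le> m"
  shows "bwd A m k = fundamental_matrix A m ** matrix_inv (fundamental_matrix A (m + k))"
proof -
  have bwd_mult: "bwd A m k ** fundamental_matrix A (m + k) = fundamental_matrix A m" for k
  proof (induction k)
    case (Suc k)
    have "bwd A m (Suc k) ** fundamental_matrix A (m + Suc k)
        = bwd A m k ** (matrix_inv (A (m + k)) ** A (m + k)) ** fundamental_matrix A (m + k)"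
      using assms by (simp add: fundamental_matrix_Suc matrix_mul_assoc)
    then show ?case
      using Suc matrix_inv_left[OF invertible_A[of "m + k"]] assms by simp
  qed simp
  have "bwd A m k = bwd A m k ** (fundamental_matrix A (m + k) ** matrix_inv (fundamental_matrix A (m + k)))"
    using matrix_inv_right[OF invertible_fundamental_matrix, of "m + k"] assms by simp
  then show ?thesis
    by (simp add: matrix_mul_assoc bwd_mult)
qed

lemma cocycle_eq_fundamental:
  "1 \<le> m \<Longrightarrow> 1 \<le> n \<Longrightarrow> cocycle A m n = fundamental_matrix A m ** matrix_inv (fundamental_matrix A n)"
  using fwd_eq_fundamental[of n "m - n"] bwd_eq_fundamental[of m "n - m"]
  by (auto simp: cocycle_def)

lemma cocycle_mult:
  assumes "1 \<le> k" "1 \<le> m" "1 \<le> n"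
  shows "cocycle A k m ** cocycle A m n = cocycle A k n"
proof -
  have "cocycle A k m ** cocycle A m n
      = fundamental_matrix A k ** (matrix_inv (fundamental_matrix A m) ** fundamental_matrix A m)
          ** matrix_inv (fundamental_matrix A n)"
    using assms by (simp add: cocycle_eq_fundamental matrix_mul_assoc)
  then show ?thesis
    using matrix_inv_left[OF invertible_fundamental_matrix[OF assms(2)]] assms
    by (simp add: cocycle_eq_fundamental)
qed

context
  fixes P :: "nat \<Rightarrow> real ^ 'd ^ 'd"
  assumes invariant_P: "invariant_projections A P"
begin

lemma projection_fundamental_matrix:
  "1 \<le> n \<Longrightarrow> P n ** fundamental_matrix A n = fundamental_matrix A n ** P 1"
proof (induction n rule: dec_induct)
  case (step n)
  have "P (Suc n) ** A n = A n ** P n"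
    using invariant_P step(1) unfolding invariant_projections_def by simp
  then have "P (Suc n) ** fundamental_matrix A (Suc n) = A n ** (P n ** fundamental_matrix A n)"
    using step(1) by (simp add: fundamental_matrix_Suc matrix_mul_assoc)
  then show ?case
    using step by (simp add: fundamental_matrix_Suc matrix_mul_assoc)
qed simp

lemma projection_cocycle:
  assumes "1 \<le> m" "1 \<le> n"
  shows "P m ** cocycle A m n = cocycle A m n ** P n"
proof -
  let ?\<Phi> = "fundamental_matrix A"
  have inv_commute: "matrix_inv (?\<Phi> n) ** P n = P 1 ** matrix_inv (?\<Phi> n)"
  proof -
    have "matrix_inv (?\<Phi> n) ** P n = matrix_inv (?\<Phi> n) ** (P n ** ?\<Phi> n) ** matrix_inv (?\<Phi> n)"
      using matrix_inv_right[OF invertible_fundamental_matrix[OF assms(2)]]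
      by (simp add: matrix_mul_assoc[symmetric])
    also have "\<dots> = P 1 ** matrix_inv (?\<Phi> n)"
      using matrix_inv_left[OF invertible_fundamental_matrix[OF assms(2)]]
      by (simp add: projection_fundamental_matrix[OF assms(2)] matrix_mul_assoc)
    finally show ?thesis .
  qed
  have "P m ** cocycle A m n = ?\<Phi> m ** (P 1 ** matrix_inv (?\<Phi> n))"
    using assms by (simp add: cocycle_eq_fundamental projection_fundamental_matrix matrix_mul_assoc)
  also have "\<dots> = cocycle A m n ** P n"
    using assms by (simp add: cocycle_eq_fundamental inv_commute matrix_mul_assoc[symmetric])
  finally show ?thesis .
qed

end

end

section \<open>A weight with two polynomial rates\<close>

lemma powr_ratio_cancel: "0 < x \<Longrightarrow> 0 < y \<Longrightarrow> (x / y) powr p * (y / x) powr (p::real) = 1"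
  by (simp add: powr_mult[symmetric])

lemma powr_neg_cancel: "0 < x \<Longrightarrow> x powr p * x powr (- p) = (1::real)"
  by (simp add: powr_minus)

definition poly_weight :: "real \<Rightarrow> real \<Rightarrow> real \<Rightarrow> real" where
  "poly_weight lam a t = min (t powr lam) (t powr a)"

lemma poly_weight_nonneg: "0 \<le> poly_weight lam a t"
  by (simp add: poly_weight_def)

lemma poly_weight_1 [simp]: "poly_weight lam a 1 = 1"
  by (simp add: poly_weight_def)

lemma poly_weight_le_powr: "poly_weight lam a t \<le> t powr lam" "poly_weight lam a t \<le> t powr a"
  by (simp_all add: poly_weight_def)

lemma poly_weight_div_le:
  assumes "0 < t" "1 \<le> s" "lam \<le> a"
  shows "poly_weight lam a (t / s) \<le> s powr (- lam) * poly_weight lam a t"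
proof -
  have div_powr: "(t / s) powr p = s powr (- p) * t powr p" for p
    using assms by (simp add: powr_divide powr_minus_divide)
  have "s powr (- a) \<le> s powr (- lam)"
    using assms by (intro powr_mono) auto
  then have "(t / s) powr a \<le> s powr (- lam) * t powr a"
    unfolding div_powr by (simp add: mult_right_mono)
  then show ?thesis
    unfolding poly_weight_def div_powr[of lam] by (simp add: min_def)
qed

lemma poly_weight_mult_le:
  assumes "0 < t" "1 \<le> s" "lam \<le> a"
  shows "poly_weight lam a (s * t) \<le> s powr a * poly_weight lam a t"
proof -
  have "s powr lam \<le> s powr a"
    using assms by (intro powr_mono) auto
  then have "(s * t) powr lam \<le> s powr a * t powr lam"
    using assms by (simp add: powr_mult mult_right_mono)
  moreover have "(s * t) powr a = s powr a * t powr a"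
    using assms by (simp add: powr_mult)
  ultimately show ?thesis
    unfolding poly_weight_def by (simp add: min_def)
qed

lemma poly_weight_ratio_shrink:
  assumes "0 < n" "n \<le> m" "0 < k" "lam \<le> a"
  shows "poly_weight lam a (k / m) \<le> (m / n) powr (- lam) * poly_weight lam a (k / n)"
    and "poly_weight lam a (n / k) \<le> (m / n) powr (- lam) * poly_weight lam a (m / k)"
proof -
  have "(k / n) / (m / n) = k / m" "(m / k) / (m / n) = n / k"
    using assms by simp_all
  then show "poly_weight lam a (k / m) \<le> (m / n) powr (- lam) * poly_weight lam a (k / n)"
    and "poly_weight lam a (n / k) \<le> (m / n) powr (- lam) * poly_weight lam a (m / k)"
    using poly_weight_div_le[of "k / n" "m / n" lam a] poly_weight_div_le[of "m / k" "m / n" lam a] assms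
    by simp_all
qed

lemma poly_weight_ratio_grow:
  assumes "0 < n" "n \<le> m" "0 < k" "lam \<le> a"
  shows "poly_weight lam a (m / k) \<le> (m / n) powr a * poly_weight lam a (n / k)"
    and "poly_weight lam a (k / n) \<le> (m / n) powr a * poly_weight lam a (k / m)"
proof -
  have "(m / n) * (n / k) = m / k" "(m / n) * (k / m) = k / n"
    using assms by simp_all
  then show "poly_weight lam a (m / k) \<le> (m / n) powr a * poly_weight lam a (n / k)"
    and "poly_weight lam a (k / n) \<le> (m / n) powr a * poly_weight lam a (k / m)"
    using poly_weight_mult_le[of "n / k" "m / n" lam a] poly_weight_mult_le[of "k / m" "m / n" lam a] assms
    by simp_all
qed

section \<open>Lyapunov norms of a nonuniform dichotomy\<close>

locale nonuniform_dichotomy =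
  fixes A :: "nat \<Rightarrow> real ^ 'd ^ 'd" and N :: "real ^ 'd \<Rightarrow> real" and P :: "nat \<Rightarrow> real ^ 'd ^ 'd"
    and K a lam eps :: real
  assumes invertible_A: "\<And>n. 1 \<le> n \<Longrightarrow> invertible (A n)"
    and norm_N: "is_norm N"
    and invariant_P: "invariant_projections A P"
    and K_pos: "0 < K" and lam_pos: "0 < lam" and lam_le_a: "lam \<le> a" and eps_nonneg: "0 \<le> eps"
    and stable_op: "\<And>m n. 1 \<le> n \<Longrightarrow> n \<le> m \<Longrightarrow>
      op_norm N (cocycle A m n ** P n) \<le> K * (real m / real n) powr (- lam) * real n powr eps"
    and unstable_op: "\<And>m n. 1 \<le> n \<Longrightarrow> n \<le> m \<Longrightarrow>
      op_norm N (cocycle A n m ** (mat 1 - P m)) \<le> K * (real m / real n) powr (- lam) * real m powr eps"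
    and forward_op: "\<And>m n. 1 \<le> n \<Longrightarrow> n \<le> m \<Longrightarrow>
      op_norm N (cocycle A m n) \<le> K * (real m / real n) powr a * real n powr eps"
    and backward_op: "\<And>m n. 1 \<le> n \<Longrightarrow> n \<le> m \<Longrightarrow>
      op_norm N (cocycle A n m) \<le> K * (real m / real n) powr a * real m powr eps"
begin

abbreviation Q :: "nat \<Rightarrow> real ^ 'd ^ 'd" where
  "Q n \<equiv> mat 1 - P n"

abbreviation w :: "real \<Rightarrow> real" where
  "w \<equiv> poly_weight lam a"

lemma N_nonneg: "0 \<le> N x"
  by (rule is_norm_nonneg[OF norm_N])

lemma N_apply_le: "op_norm N T \<le> B \<Longrightarrow> N (T *v x) \<le> B * N x"
  using op_norm_bound[OF norm_N, of T x] mult_right_mono[OF _ N_nonneg] by (meson order_trans)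

lemma P_idem: "1 \<le> n \<Longrightarrow> P n ** P n = P n"
  using invariant_P unfolding invariant_projections_def by simp

lemma Q_mult_P: "1 \<le> n \<Longrightarrow> Q n ** P n = 0"
  by (simp add: matrix_diff_rdistrib P_idem)

lemma P_mult_Q: "1 \<le> n \<Longrightarrow> P n ** Q n = 0"
  by (simp add: matrix_diff_ldistrib P_idem)

lemma Q_idem: "1 \<le> n \<Longrightarrow> Q n ** Q n = Q n"
  by (simp add: matrix_diff_rdistrib P_mult_Q)

lemma P_cocycle: "1 \<le> m \<Longrightarrow> 1 \<le> n \<Longrightarrow> P m ** cocycle A m n = cocycle A m n ** P n"
  by (rule projection_cocycle[OF invertible_A invariant_P])

lemma Q_cocycle: "1 \<le> m \<Longrightarrow> 1 \<le> n \<Longrightarrow> Q m ** cocycle A m n = cocycle A m n ** Q n"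
  by (simp add: matrix_diff_rdistrib matrix_diff_ldistrib P_cocycle)

lemma cocycle_comp_commuting:
  assumes "1 \<le> k" "1 \<le> m" "1 \<le> n" "R m ** cocycle A m n = cocycle A m n ** R n"
  shows "(cocycle A k m ** R m) *v ((cocycle A m n ** S) *v x) = (cocycle A k n ** (R n ** S)) *v x"
proof -
  have "(cocycle A k m ** R m) ** (cocycle A m n ** S) = cocycle A k m ** (R m ** cocycle A m n) ** S"
    by (simp add: matrix_mul_assoc)
  also have "\<dots> = cocycle A k n ** (R n ** S)"
    using assms by (simp add: matrix_mul_assoc cocycle_mult[OF invertible_A])
  finally show ?thesis
    by (simp add: matrix_vector_mul_assoc)
qed

lemma cocycle_comp_P:
  assumes "1 \<le> k" "1 \<le> m" "1 \<le> n"
  shows "(cocycle A k m ** P m) *v ((cocycle A m n ** S) *v x) = (cocycle A k n ** (P n ** S)) *v x"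
    and "(cocycle A k m ** P m) *v (cocycle A m n *v x) = (cocycle A k n ** P n) *v x"
  using cocycle_comp_commuting[OF assms, of P, OF P_cocycle]
    cocycle_comp_commuting[OF assms, of P, OF P_cocycle, of "mat 1"] assms
  by simp_all

lemma cocycle_comp_Q:
  assumes "1 \<le> k" "1 \<le> m" "1 \<le> n"
  shows "(cocycle A k m ** Q m) *v ((cocycle A m n ** S) *v x) = (cocycle A k n ** (Q n ** S)) *v x"
    and "(cocycle A k m ** Q m) *v (cocycle A m n *v x) = (cocycle A k n ** Q n) *v x"
  using cocycle_comp_commuting[OF assms, of Q, OF Q_cocycle]
    cocycle_comp_commuting[OF assms, of Q, OF Q_cocycle, of "mat 1"] assms
  by simp_all

definition lyapunov_term :: "nat \<Rightarrow> real ^ 'd \<Rightarrow> nat \<Rightarrow> real" where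
  "lyapunov_term n x k = w (real k / real n) * N ((cocycle A k n ** P n) *v x)
     + w (real n / real k) * N ((cocycle A k n ** Q n) *v x)"

definition lyapunov_norm :: "nat \<Rightarrow> real ^ 'd \<Rightarrow> real" where
  "lyapunov_norm n x = (SUP k\<in>{1..}. lyapunov_term n x k)"

lemma P_apply_le: "1 \<le> n \<Longrightarrow> N (P n *v x) \<le> K * real n powr eps * N x"
  using N_apply_le[OF stable_op[of n n]] by (simp add: cocycle_def)

lemma Q_apply_le: "1 \<le> n \<Longrightarrow> N (Q n *v x) \<le> K * real n powr eps * N x"
  using N_apply_le[OF unstable_op[of n n]] by (simp add: cocycle_def)

lemma weighted_stable_le:
  assumes "1 \<le> n" "1 \<le> k"
  shows "w (real k / real n) * N ((cocycle A k n ** P n) *v x)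
    \<le> K * max 1 K * real n powr (2 * eps) * N x"
proof (cases "n \<le> k")
  case True
  have "w (real k / real n) * N ((cocycle A k n ** P n) *v x)
      \<le> (real k / real n) powr lam * (K * (real k / real n) powr (- lam) * real n powr eps * N x)"
    using assms True
    by (intro mult_mono poly_weight_le_powr N_apply_le stable_op) (auto simp: N_nonneg)
  also have "\<dots> = K * real n powr eps * N x"
    using assms powr_neg_cancel[of "real k / real n" lam] by simp
  also have "\<dots> \<le> K * max 1 K * real n powr (2 * eps) * N x"
    using assms K_pos eps_nonneg
    by (intro mult_right_mono mult_mono powr_mono) (auto simp: N_nonneg)
  finally show ?thesis .
next
  case False
  have "N ((cocycle A k n ** P n) *v x) \<le> K * (real n / real k) powr a * real n powr eps * N (P n *v x)"
    using assms False by (simp add: matrix_vector_mul_assoc[symmetric] N_apply_le backward_op)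
  also have "\<dots> \<le> K * (real n / real k) powr a * real n powr eps * (K * real n powr eps * N x)"
    using assms K_pos by (intro mult_left_mono P_apply_le) auto
  finally have "w (real k / real n) * N ((cocycle A k n ** P n) *v x)
      \<le> (real k / real n) powr a * (K * (real n / real k) powr a * real n powr eps * (K * real n powr eps * N x))"
    by (intro mult_mono poly_weight_le_powr) (auto simp: N_nonneg)
  also have "\<dots> = K * K * (real n powr eps * real n powr eps) * N x"
    using assms powr_ratio_cancel[of "real k" "real n" a] by (simp add: algebra_simps)
  also have "\<dots> \<le> K * max 1 K * real n powr (2 * eps) * N x"
    using K_pos by (intro mult_right_mono mult_mono) (auto simp: N_nonneg powr_add[symmetric])
  finally show ?thesis .
qed

lemma weighted_unstable_le:
  assumes "1 \<le> n" "1 \<le> k"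
  shows "w (real n / real k) * N ((cocycle A k n ** Q n) *v x)
    \<le> K * max 1 K * real n powr (2 * eps) * N x"
proof (cases "k \<le> n")
  case True
  have "w (real n / real k) * N ((cocycle A k n ** Q n) *v x)
      \<le> (real n / real k) powr lam * (K * (real n / real k) powr (- lam) * real n powr eps * N x)"
    using assms True
    by (intro mult_mono poly_weight_le_powr N_apply_le unstable_op) (auto simp: N_nonneg)
  also have "\<dots> = K * real n powr eps * N x"
    using assms powr_neg_cancel[of "real n / real k" lam] by simp
  also have "\<dots> \<le> K * max 1 K * real n powr (2 * eps) * N x"
    using assms K_pos eps_nonneg
    by (intro mult_right_mono mult_mono powr_mono) (auto simp: N_nonneg)
  finally show ?thesis .
next
  case False
  have "N ((cocycle A k n ** Q n) *v x) \<le> K * (real k / real n) powr a * real n powr eps * N (Q n *v x)"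
    using assms False by (simp add: matrix_vector_mul_assoc[symmetric] N_apply_le forward_op)
  also have "\<dots> \<le> K * (real k / real n) powr a * real n powr eps * (K * real n powr eps * N x)"
    using assms K_pos by (intro mult_left_mono Q_apply_le) auto
  finally have "w (real n / real k) * N ((cocycle A k n ** Q n) *v x)
      \<le> (real n / real k) powr a * (K * (real k / real n) powr a * real n powr eps * (K * real n powr eps * N x))"
    by (intro mult_mono poly_weight_le_powr) (auto simp: N_nonneg)
  also have "\<dots> = K * K * (real n powr eps * real n powr eps) * N x"
    using assms powr_ratio_cancel[of "real n" "real k" a] by (simp add: algebra_simps)
  also have "\<dots> \<le> K * max 1 K * real n powr (2 * eps) * N x"
    using K_pos by (intro mult_right_mono mult_mono) (auto simp: N_nonneg powr_add[symmetric])
  finally show ?thesis .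
qed

lemma lyapunov_term_le:
  assumes "1 \<le> n" "1 \<le> k"
  shows "lyapunov_term n x k \<le> 2 * K * max 1 K * real n powr (2 * eps) * N x"
  using weighted_stable_le[OF assms, of x] weighted_unstable_le[OF assms, of x]
  unfolding lyapunov_term_def by linarith

lemma lyapunov_term_le_norm:
  assumes "1 \<le> n" "1 \<le> k"
  shows "lyapunov_term n x k \<le> lyapunov_norm n x"
proof -
  have "bdd_above (lyapunov_term n x ` {1..})"
    using lyapunov_term_le[OF assms(1)] by (intro bdd_aboveI2) auto
  then show ?thesis
    unfolding lyapunov_norm_def using assms(2) by (intro cSUP_upper) auto
qed

lemma lyapunov_norm_le: "(\<And>k. 1 \<le> k \<Longrightarrow> lyapunov_term n x k \<le> B) \<Longrightarrow> lyapunov_norm n x \<le> B"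
  unfolding lyapunov_norm_def by (intro cSUP_least) auto

lemma lyapunov_norm_mono:
  assumes "1 \<le> n" "0 \<le> c" "\<And>k. 1 \<le> k \<Longrightarrow> lyapunov_term m y k \<le> c * lyapunov_term n x k"
  shows "lyapunov_norm m y \<le> c * lyapunov_norm n x"
proof (rule lyapunov_norm_le)
  fix k :: nat
  assume "1 \<le> k"
  then show "lyapunov_term m y k \<le> c * lyapunov_norm n x"
    using assms lyapunov_term_le_norm[OF assms(1)] by (meson mult_left_mono order_trans)
qed

lemma lyapunov_norm_upper: "1 \<le> n \<Longrightarrow> lyapunov_norm n x \<le> 2 * K * max 1 K * real n powr (2 * eps) * N x"
  by (intro lyapunov_norm_le lyapunov_term_le)

lemma lyapunov_norm_lower:
  assumes "1 \<le> n"
  shows "N x \<le> lyapunov_norm n x"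
proof -
  have "N x = N (P n *v x + Q n *v x)"
    by (simp add: matrix_vector_mult_diff_rdistrib)
  also have "\<dots> \<le> lyapunov_term n x n"
    using assms is_norm_triangle[OF norm_N] by (simp add: lyapunov_term_def cocycle_def)
  also have "\<dots> \<le> lyapunov_norm n x"
    by (rule lyapunov_term_le_norm[OF assms assms])
  finally show ?thesis .
qed

lemma lyapunov_term_scaleR: "lyapunov_term n (c *\<^sub>R x) k = \<bar>c\<bar> * lyapunov_term n x k"
  unfolding lyapunov_term_def
  by (simp add: is_norm_scaleR[OF norm_N] algebra_simps)

lemma lyapunov_term_triangle: "lyapunov_term n (x + y) k \<le> lyapunov_term n x k + lyapunov_term n y k"
proof -
  have tri: "w t * N (M *v (x + y)) \<le> w t * N (M *v x) + w t * N (M *v y)" for t M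
    using mult_left_mono[OF is_norm_triangle[OF norm_N] poly_weight_nonneg]
    by (simp add: matrix_vector_right_distrib distrib_left)
  show ?thesis
    unfolding lyapunov_term_def
    using tri[of "real k / real n" "cocycle A k n ** P n"] tri[of "real n / real k" "cocycle A k n ** Q n"]
    by linarith
qed

lemma lyapunov_norm_is_norm:
  assumes n: "1 \<le> n"
  shows "is_norm (lyapunov_norm n)"
proof -
  have nonneg: "0 \<le> lyapunov_norm n x" for x
    using lyapunov_norm_lower[OF n] N_nonneg order_trans by blast
  have scale_le: "lyapunov_norm n (c *\<^sub>R x) \<le> \<bar>c\<bar> * lyapunov_norm n x" for c x
    using n by (intro lyapunov_norm_mono) (auto simp: lyapunov_term_scaleR)
  show ?thesis
    unfolding is_norm_def
  proof (intro conjI allI)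
    fix x
    show "0 \<le> lyapunov_norm n x"
      by (rule nonneg)
    show "lyapunov_norm n x = 0 \<longleftrightarrow> x = 0"
      using lyapunov_norm_lower[OF n, of x] lyapunov_norm_upper[OF n, of 0] nonneg[of x]
        is_norm_eq_0_iff[OF norm_N, of x] N_nonneg[of x] is_norm_zero[OF norm_N]
      by auto
  next
    fix c x
    show "lyapunov_norm n (c *\<^sub>R x) = \<bar>c\<bar> * lyapunov_norm n x"
    proof (cases "c = 0")
      case False
      have "lyapunov_norm n x \<le> \<bar>1 / c\<bar> * lyapunov_norm n (c *\<^sub>R x)"
        using scale_le[of "1 / c" "c *\<^sub>R x"] False by simp
      then have "\<bar>c\<bar> * lyapunov_norm n x \<le> lyapunov_norm n (c *\<^sub>R x)"
        using False by (simp add: field_simps)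
      then show ?thesis
        using scale_le[of c x] by linarith
    qed (use scale_le[of 0 x] nonneg[of 0] in simp)
  next
    fix x y
    show "lyapunov_norm n (x + y) \<le> lyapunov_norm n x + lyapunov_norm n y"
      using lyapunov_term_triangle lyapunov_term_le_norm[OF n]
      by (intro lyapunov_norm_le) (meson add_mono order_trans)
  qed
qed

lemma lyapunov_term_stable:
  assumes "1 \<le> n" "n \<le> m" "1 \<le> k"
  shows "lyapunov_term m ((cocycle A m n ** P n) *v x) k
    \<le> (real m / real n) powr (- lam) * lyapunov_term n x k"
proof -
  have "lyapunov_term m ((cocycle A m n ** P n) *v x) k
      = w (real k / real m) * N ((cocycle A k n ** P n) *v x)"
    using assms by (simp add: lyapunov_term_def cocycle_comp_P cocycle_comp_Q
        P_idem Q_mult_P is_norm_zero[OF norm_N])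
  also have "\<dots> \<le> (real m / real n) powr (- lam) * w (real k / real n) * N ((cocycle A k n ** P n) *v x)"
    using assms lam_pos lam_le_a
    by (intro mult_right_mono poly_weight_ratio_shrink(1)) (auto simp: N_nonneg)
  also have "\<dots> \<le> (real m / real n) powr (- lam) * lyapunov_term n x k"
    unfolding lyapunov_term_def mult.assoc
    by (intro mult_left_mono) (auto simp: poly_weight_nonneg N_nonneg)
  finally show ?thesis .
qed

lemma lyapunov_term_unstable:
  assumes "1 \<le> n" "n \<le> m" "1 \<le> k"
  shows "lyapunov_term n ((cocycle A n m ** Q m) *v x) k
    \<le> (real m / real n) powr (- lam) * lyapunov_term m x k"
proof -
  have "lyapunov_term n ((cocycle A n m ** Q m) *v x) k
      = w (real n / real k) * N ((cocycle A k m ** Q m) *v x)"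
    using assms by (simp add: lyapunov_term_def cocycle_comp_P cocycle_comp_Q
        Q_idem P_mult_Q is_norm_zero[OF norm_N])
  also have "\<dots> \<le> (real m / real n) powr (- lam) * w (real m / real k) * N ((cocycle A k m ** Q m) *v x)"
    using assms lam_pos lam_le_a
    by (intro mult_right_mono poly_weight_ratio_shrink(2)) (auto simp: N_nonneg)
  also have "\<dots> \<le> (real m / real n) powr (- lam) * lyapunov_term m x k"
    unfolding lyapunov_term_def mult.assoc
    by (intro mult_left_mono) (auto simp: poly_weight_nonneg N_nonneg)
  finally show ?thesis .
qed

lemma ratio_powr_neg_le:
  assumes "1 \<le> n" "n \<le> m"
  shows "(real m / real n) powr (- lam) \<le> (real m / real n) powr a"
  using assms lam_pos lam_le_a by (intro powr_mono) auto

lemma lyapunov_term_forward: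
  assumes "1 \<le> n" "n \<le> m" "1 \<le> k"
  shows "lyapunov_term m (cocycle A m n *v x) k \<le> (real m / real n) powr a * lyapunov_term n x k"
proof -
  have "w (real k / real m) \<le> (real m / real n) powr (- lam) * w (real k / real n)"
    using assms lam_le_a by (intro poly_weight_ratio_shrink(1)) auto
  also have "\<dots> \<le> (real m / real n) powr a * w (real k / real n)"
    using assms by (intro mult_right_mono ratio_powr_neg_le poly_weight_nonneg)
  finally have "w (real k / real m) \<le> (real m / real n) powr a * w (real k / real n)" .
  moreover have "w (real m / real k) \<le> (real m / real n) powr a * w (real n / real k)"
    using assms lam_le_a by (intro poly_weight_ratio_grow(1)) auto
  moreover have "lyapunov_term m (cocycle A m n *v x) k
      = w (real k / real m) * N ((cocycle A k n ** P n) *v x)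
        + w (real m / real k) * N ((cocycle A k n ** Q n) *v x)"
    using assms by (simp add: lyapunov_term_def cocycle_comp_P cocycle_comp_Q)
  ultimately have "lyapunov_term m (cocycle A m n *v x) k
      \<le> (real m / real n) powr a * w (real k / real n) * N ((cocycle A k n ** P n) *v x)
        + (real m / real n) powr a * w (real n / real k) * N ((cocycle A k n ** Q n) *v x)"
    by (metis add_mono mult_right_mono N_nonneg)
  then show ?thesis
    by (simp add: lyapunov_term_def algebra_simps)
qed

lemma lyapunov_term_backward:
  assumes "1 \<le> n" "n \<le> m" "1 \<le> k"
  shows "lyapunov_term n (cocycle A n m *v x) k \<le> (real m / real n) powr a * lyapunov_term m x k"
proof -
  have "w (real n / real k) \<le> (real m / real n) powr (- lam) * w (real m / real k)"
    using assms lam_le_a by (intro poly_weight_ratio_shrink(2)) auto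
  also have "\<dots> \<le> (real m / real n) powr a * w (real m / real k)"
    using assms by (intro mult_right_mono ratio_powr_neg_le poly_weight_nonneg)
  finally have "w (real n / real k) \<le> (real m / real n) powr a * w (real m / real k)" .
  moreover have "w (real k / real n) \<le> (real m / real n) powr a * w (real k / real m)"
    using assms lam_le_a by (intro poly_weight_ratio_grow(2)) auto
  moreover have "lyapunov_term n (cocycle A n m *v x) k
      = w (real k / real n) * N ((cocycle A k m ** P m) *v x)
        + w (real n / real k) * N ((cocycle A k m ** Q m) *v x)"
    using assms by (simp add: lyapunov_term_def cocycle_comp_P cocycle_comp_Q)
  ultimately have "lyapunov_term n (cocycle A n m *v x) k
      \<le> (real m / real n) powr a * w (real k / real m) * N ((cocycle A k m ** P m) *v x)
        + (real m / real n) powr a * w (real m / real k) * N ((cocycle A k m ** Q m) *v x)"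
    by (metis add_mono mult_right_mono N_nonneg)
  then show ?thesis
    by (simp add: lyapunov_term_def algebra_simps)
qed

lemma lyapunov_norm_dichotomy: "strong_poly_dichotomy_wrt A lyapunov_norm"
  unfolding strong_poly_dichotomy_wrt_def
proof (intro exI conjI allI impI)
  fix m n :: nat and x
  assume "1 \<le> n \<and> n \<le> m"
  then have n: "1 \<le> n" and nm: "n \<le> m"
    by auto
  show "lyapunov_norm m ((cocycle A m n ** P n) *v x)
      \<le> 1 * (real m / real n) powr (- lam) * lyapunov_norm n x"
    using lyapunov_norm_mono[OF n _ lyapunov_term_stable[OF n nm]] by simp
  show "lyapunov_norm n ((cocycle A n m ** Q m) *v x)
      \<le> 1 * (real m / real n) powr (- lam) * lyapunov_norm m x"
    using lyapunov_norm_mono[OF order_trans[OF n nm] _ lyapunov_term_unstable[OF n nm]] by simp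
  show "lyapunov_norm m (cocycle A m n *v x) \<le> 1 * (real m / real n) powr a * lyapunov_norm n x"
    using lyapunov_norm_mono[OF n _ lyapunov_term_forward[OF n nm]] by simp
  show "lyapunov_norm n (cocycle A n m *v x) \<le> 1 * (real m / real n) powr a * lyapunov_norm m x"
    using lyapunov_norm_mono[OF order_trans[OF n nm] _ lyapunov_term_backward[OF n nm]] by simp
qed (use lam_pos lam_le_a invariant_P in auto)

end

section \<open>Back from Lyapunov norms to the nonuniform dichotomy\<close>

lemma op_norm_le_via_norms:
  assumes "is_norm N" "\<And>x. N x \<le> N_out x" "\<And>x. N_in x \<le> C * N x"
    "\<And>x. N_out (T *v x) \<le> c * N_in x" "0 \<le> c" "0 \<le> C"
  shows "op_norm N T \<le> c * C"
proof (rule op_norm_le[OF assms(1)])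
  fix x
  have "N (T *v x) \<le> c * N_in x"
    using assms(2,4) order_trans by blast
  also have "\<dots> \<le> c * C * N x"
    using mult_left_mono[OF assms(3) assms(5)] by (simp add: mult.assoc)
  finally show "N (T *v x) \<le> c * C * N x" .
  show "0 \<le> c * C"
    using assms(5,6) by simp
qed

lemma nonuniform_dichotomy_via_norms:
  assumes norm_N: "is_norm N" and dichotomy: "strong_poly_dichotomy_wrt A Ns"
    and C: "0 < C" and \<delta>: "0 \<le> \<delta>"
    and lower: "\<And>n x. 1 \<le> n \<Longrightarrow> N x \<le> Ns n x"
    and upper: "\<And>n x. 1 \<le> n \<Longrightarrow> Ns n x \<le> C * real n powr \<delta> * N x"
  shows "nonuniform_strong_poly_dichotomy A N"
proof -
  obtain K a lam P where K: "K > 0" and lam: "a \<ge> lam" "lam > 0"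
    and P: "invariant_projections A P"
    and bounds: "\<And>m n x. 1 \<le> n \<and> n \<le> m \<longrightarrow>
         Ns m (cocycle A m n ** P n *v x) \<le> K * (real m / real n) powr (-lam) * Ns n x
       \<and> Ns n (cocycle A n m ** (mat 1 - P m) *v x) \<le> K * (real m / real n) powr (-lam) * Ns m x
       \<and> Ns m (cocycle A m n *v x) \<le> K * (real m / real n) powr a * Ns n x
       \<and> Ns n (cocycle A n m *v x) \<le> K * (real m / real n) powr a * Ns m x"
    using dichotomy unfolding strong_poly_dichotomy_wrt_def by blast
  have "op_norm N (cocycle A m n ** P n) \<le> K * C * (real m / real n) powr (- lam) * real n powr \<delta>
    \<and> op_norm N (cocycle A n m ** (mat 1 - P m)) \<le> K * C * (real m / real n) powr (- lam) * real m powr \<delta>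
    \<and> op_norm N (cocycle A m n) \<le> K * C * (real m / real n) powr a * real n powr \<delta>
    \<and> op_norm N (cocycle A n m) \<le> K * C * (real m / real n) powr a * real m powr \<delta>"
    if "1 \<le> n" "n \<le> m" for m n
  proof -
    have forward: "op_norm N T \<le> c * (C * real n powr \<delta>)"
      if "\<And>x. Ns m (T *v x) \<le> c * Ns n x" "0 \<le> c" for T c
      using that \<open>1 \<le> n\<close> \<open>n \<le> m\<close> C lower[of m] upper[of n]
      by (intro op_norm_le_via_norms[OF norm_N, where N_out = "Ns m" and N_in = "Ns n"]) auto
    have backward: "op_norm N T \<le> c * (C * real m powr \<delta>)"
      if "\<And>x. Ns n (T *v x) \<le> c * Ns m x" "0 \<le> c" for T c
      using that \<open>1 \<le> n\<close> \<open>n \<le> m\<close> C lower[of n] upper[of m]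
      by (intro op_norm_le_via_norms[OF norm_N, where N_out = "Ns n" and N_in = "Ns m"]) auto
    have "op_norm N (cocycle A m n ** P n) \<le> K * (real m / real n) powr (- lam) * (C * real n powr \<delta>)"
      by (rule forward) (use bounds that K in auto)
    moreover have "op_norm N (cocycle A n m ** (mat 1 - P m))
        \<le> K * (real m / real n) powr (- lam) * (C * real m powr \<delta>)"
      by (rule backward) (use bounds that K in auto)
    moreover have "op_norm N (cocycle A m n) \<le> K * (real m / real n) powr a * (C * real n powr \<delta>)"
      by (rule forward) (use bounds that K in auto)
    moreover have "op_norm N (cocycle A n m) \<le> K * (real m / real n) powr a * (C * real m powr \<delta>)"
      by (rule backward) (use bounds that K in auto)
    ultimately show ?thesis
      by (simp add: mult_ac)
  qed
  then show ?thesis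
    unfolding nonuniform_strong_poly_dichotomy_def using K C \<delta> lam P
    by (intro exI[of _ "K * C"] exI[of _ a] exI[of _ lam] exI[of _ \<delta>] exI[of _ P]) auto
qed

theorem proposition2p1:
  fixes A :: "nat \<Rightarrow> real ^ 'd ^ 'd" and N :: "real ^ 'd \<Rightarrow> real"
  assumes "\<And>n. n \<ge> 1 \<Longrightarrow> invertible (A n)"
    and "is_norm N"
  shows "nonuniform_strong_poly_dichotomy A N \<longleftrightarrow>
    (\<exists>Ns :: nat \<Rightarrow> real ^ 'd \<Rightarrow> real.
       (\<forall>n\<ge>1. is_norm (Ns n)) \<and> strong_poly_dichotomy_wrt A Ns \<and>
       (\<exists>C \<delta>. C > 0 \<and> \<delta> \<ge> 0 \<and>
          (\<forall>n\<ge>1. \<forall>x. N x \<le> Ns n x \<and> Ns n x \<le> C * real n powr \<delta> * N x)))"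
proof
  assume "nonuniform_strong_poly_dichotomy A N"
  then obtain P K a lam eps where "nonuniform_dichotomy A N P K a lam eps"
    using assms unfolding nonuniform_strong_poly_dichotomy_def nonuniform_dichotomy_def by blast
  then interpret nonuniform_dichotomy A N P K a lam eps .
  have "0 < 2 * K * max 1 K" "0 \<le> 2 * eps"
    using K_pos eps_nonneg by auto
  then show "\<exists>Ns. (\<forall>n\<ge>1. is_norm (Ns n)) \<and> strong_poly_dichotomy_wrt A Ns \<and>
       (\<exists>C \<delta>. C > 0 \<and> \<delta> \<ge> 0 \<and> (\<forall>n\<ge>1. \<forall>x. N x \<le> Ns n x \<and> Ns n x \<le> C * real n powr \<delta> * N x))"
    using lyapunov_norm_is_norm lyapunov_norm_dichotomy lyapunov_norm_lower lyapunov_norm_upper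
    by blast
qed (use nonuniform_dichotomy_via_norms[OF assms(2)] in blast)

end
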